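(* Let $q,q',n$ be integers with $q'\ge 2q+2$, $q>1$ and $n>1$. Let $S$ be an $\mathcal{OS}_q(n)$ of period $m$ with ring sequence $[s_0,\ldots,s_{m-1}]$ where $s_0=0$; for $x\in\mathbb{Z}_q$ let $x'$ denote the class in $\mathbb{Z}_{q'}$ of the integer in $\{0,\ldots,q-1\}$ representing $x$; define $t_i=(-1)^{i+m-1}s_i'$ if $s_i'\neq0$ and $t_i=(-1)^{i+m-1}q$ if $s_i'=0$; and let $U$ be the sequence over $\mathbb{Z}_{q'}$ of period $4m$ with ring sequence $[s_0',\ldots,s_{m-1}',-s_0',\ldots,-s_{m-1}',t_0,\ldots,t_{m-1},-t_0,\ldots,-t_{m-1}]$ (an $\mathcal{SOS}_{q'}(n)$ containing an even number of zeros in its ring sequence). Let $U'$ be obtained from $U$ by replacing half of the zeros in its ring sequence by $q+1$ and the other half by $q'-q-1$. Then $U'$ is a good $\mathcal{SOS}_{q'}(n)$ of the same period as $U$, and $w_{q'}(U')=0$.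
   Context: For a periodic sequence $S=(s_i)$ write $\mathbf{s}_n(i)=(s_i,\ldots,s_{i+n-1})$; $\mathbf{u}^R$ is the reverse of a tuple and $-\mathbf{u}$ its termwise negative. An $n$-window sequence of period $m$ satisfies $\mathbf{s}_n(i)=\mathbf{s}_n(j)\Rightarrow i\equiv j\pmod m$. An $\mathcal{OS}_q(n)$ is a $q$-ary $n$-window sequence with $\mathbf{s}_n(i)\neq\mathbf{s}_n(j)^R$ for all $i,j$; an $\mathcal{SOS}_q(n)$ is an $\mathcal{OS}_q(n)$ with also $\mathbf{s}_n(i)\neq-\mathbf{s}_n(j)^R$ for all $i,j$. Such a sequence is good if every run of consecutive $0$s has length at most $n-2$. The ring sequence of a sequence of period $m$ is one period. The weight $w(U)$ is the integer sum of one period with terms in $\{0,\ldots,q'-1\}$; $w_{q'}(U)=w(U)\bmod q'$. *)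

theory Defs
  imports Main
begin

text \<open>A periodic sequence of period m is represented by its ring sequence (one period),
  a list of length m; elements of Z_q are represented by integers in {0..q-1}.\<close>

definition win :: "int list \<Rightarrow> nat \<Rightarrow> nat \<Rightarrow> int list" where
  "win xs n i = map (\<lambda>j. xs ! ((i + j) mod length xs)) [0..<n]"

definition neg_mod :: "int \<Rightarrow> int list \<Rightarrow> int list" where
  "neg_mod q u = map (\<lambda>x. (- x) mod q) u"

definition n_window_seq :: "nat \<Rightarrow> int list \<Rightarrow> bool" where
  "n_window_seq n xs \<longleftrightarrow> xs \<noteq> [] \<and>
     (\<forall>i j. win xs n i = win xs n j \<longrightarrow> i mod length xs = j mod length xs)"

definition OS :: "int \<Rightarrow> nat \<Rightarrow> int list \<Rightarrow> bool" where
  "OS q n xs \<longleftrightarrow> set xs \<subseteq> {0..<q} \<and> n_window_seq n xs \<and>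
     (\<forall>i j. win xs n i \<noteq> rev (win xs n j))"

definition SOS :: "int \<Rightarrow> nat \<Rightarrow> int list \<Rightarrow> bool" where
  "SOS q n xs \<longleftrightarrow> OS q n xs \<and> (\<forall>i j. win xs n i \<noteq> neg_mod q (rev (win xs n j)))"

text \<open>good: every run of consecutive zeros has length at most n-2, i.e. no n-1
  cyclically consecutive zeros.\<close>
definition good :: "nat \<Rightarrow> int list \<Rightarrow> bool" where
  "good n xs \<longleftrightarrow> (\<forall>i. win xs (n - 1) i \<noteq> replicate (n - 1) 0)"

definition weight :: "int list \<Rightarrow> int" where
  "weight xs = sum_list xs"

definition weight_mod :: "int \<Rightarrow> int list \<Rightarrow> int" where
  "weight_mod q' xs = weight xs mod q'"

definition lift_seq :: "int \<Rightarrow> int list \<Rightarrow> int list" where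
  "lift_seq q' ss = map (\<lambda>x. x mod q') ss"

definition t_seq :: "int \<Rightarrow> int \<Rightarrow> int list \<Rightarrow> int list" where
  "t_seq q q' ss = map (\<lambda>i. let s' = (ss ! i) mod q'; sg = (-1::int) ^ (i + length ss - 1) in
        if s' \<noteq> 0 then (sg * s') mod q' else (sg * q) mod q') [0..<length ss]"

definition constrU :: "int \<Rightarrow> int \<Rightarrow> int list \<Rightarrow> int list" where
  "constrU q q' ss = lift_seq q' ss @ neg_mod q' (lift_seq q' ss) @ t_seq q q' ss
                      @ neg_mod q' (t_seq q q' ss)"

definition half_zero_replacement :: "int \<Rightarrow> int \<Rightarrow> int list \<Rightarrow> int list \<Rightarrow> bool" where
  "half_zero_replacement q q' U U' \<longleftrightarrow> length U' = length U \<and>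
     (\<exists>Z. Z \<subseteq> {k. k < length U \<and> U ! k = 0} \<and>
          2 * card Z = card {k. k < length U \<and> U ! k = 0} \<and>
          (\<forall>k < length U. U ! k \<noteq> 0 \<longrightarrow> U' ! k = U ! k) \<and>
          (\<forall>k \<in> Z. U' ! k = q + 1) \<and>
          (\<forall>k < length U. U ! k = 0 \<and> k \<notin> Z \<longrightarrow> U' ! k = q' - q - 1))"

end

theory Submission
  imports Defs
begin

(* Every entry of U, and of its negation, reduces to the digit of S at the same position
  modulo m (base_digit), so a reversed or negated-reversed repetition of a window of U would
  give a reversed repetition of a window of S. Equal windows of U at distinct positions must
  therefore start at the same offset r in two different blocks. The sign of t_r alternates
  with r, so two blocks can agree at consecutive offsets only if they are the blocks S and -S,
  where agreement forces s_r = 0: this yields either an all-zero (palindromic) window of S or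
  a clash between -s_0 = 0 and t_0 = +-q. Replacing the zeros by q+1 and q'-q-1 = -(q+1) is
  undone by a map commuting with negation, so U' inherits the SOS property, has no zeros, and
  its weight differs from that of U by a multiple of q'; the weight of U is a sum of pairs
  x + (-x). *)

lemma win_length [simp]: "length (win xs n i) = n"
  by (simp add: win_def)

lemma win_nth [simp]: "j < n \<Longrightarrow> win xs n i ! j = xs ! ((i + j) mod length xs)"
  by (simp add: win_def)

lemma win_mod: "win xs n (i mod length xs) = win xs n i"
  by (simp add: win_def mod_add_left_eq)

lemma set_win_subset: "xs \<noteq> [] \<Longrightarrow> set (win xs n i) \<subseteq> set xs"
  by (auto simp: win_def)

lemma win_map: "xs \<noteq> [] \<Longrightarrow> win (map f xs) n i = map f (win xs n i)"
  by (simp add: win_def)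

lemma win_cover:
  assumes "xs \<noteq> []" and "0 < c" and "length ys = c * length xs"
    and "\<And>k. k < length ys \<Longrightarrow> f (ys ! k) = xs ! (k mod length xs)"
  shows "map f (win ys n i) = win xs n i"
proof (rule nth_equalityI)
  fix j assume "j < length (map f (win ys n i))"
  then have "j < n" by simp
  moreover have "(i + j) mod length ys < length ys"
    using assms(1-3) by simp
  moreover have "(i + j) mod length ys mod length xs = (i + j) mod length xs"
    using assms(3) by (simp add: mod_mod_cancel)
  ultimately show "map f (win ys n i) ! j = win xs n i ! j"
    using assms(4) by simp
qed simp

lemma minus_mod_eq_diff: "0 < x \<Longrightarrow> x < (p::int) \<Longrightarrow> (- x) mod p = p - x"
  by (simp add: zmod_zminus1_eq_if)

lemma dvd_sum_list_plus_neg_mod: "q dvd sum_list xs + sum_list (neg_mod q xs)"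
proof (induction xs)
  case (Cons x xs)
  have "q dvd x + (- x) mod q"
    by (simp add: dvd_eq_mod_eq_0 mod_add_right_eq)
  then have "q dvd (x + (- x) mod q) + (sum_list xs + sum_list (neg_mod q xs))"
    using Cons.IH by (rule dvd_add)
  then show ?case by (simp add: neg_mod_def algebra_simps)
qed (simp add: neg_mod_def)

lemma SOS_reflect_map:
  assumes SOS: "SOS q n (map f ys)" and range: "set ys \<subseteq> {0..<q}"
    and f_minus: "\<And>x. x \<in> set ys \<Longrightarrow> f ((- x) mod q) = (- f x) mod q"
  shows "SOS q n ys"
proof -
  have "ys \<noteq> []"
    using SOS by (auto simp: SOS_def OS_def n_window_seq_def)
  then have win_f: "win (map f ys) n i = map f (win ys n i)" for i
    by (rule win_map)
  have neg_f: "map f (neg_mod q (rev (win ys n j))) = neg_mod q (rev (map f (win ys n j)))" for j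
  proof -
    have "\<forall>x \<in> set (win ys n j). f ((- x) mod q) = (- f x) mod q"
      using set_win_subset[OF \<open>ys \<noteq> []\<close>] f_minus by blast
    then show ?thesis by (simp add: neg_mod_def rev_map)
  qed
  have "n_window_seq n ys"
    unfolding n_window_seq_def
  proof (intro conjI allI impI)
    fix i j assume "win ys n i = win ys n j"
    then have "win (map f ys) n i = win (map f ys) n j" by (simp only: win_f)
    then show "i mod length ys = j mod length ys"
      using SOS unfolding SOS_def OS_def n_window_seq_def length_map by blast
  qed fact
  moreover have "win ys n i \<noteq> rev (win ys n j)" for i j
  proof
    assume "win ys n i = rev (win ys n j)"
    then have "win (map f ys) n i = rev (win (map f ys) n j)" by (simp only: win_f rev_map)
    then show False using SOS unfolding SOS_def OS_def by blast
  qed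
  moreover have "win ys n i \<noteq> neg_mod q (rev (win ys n j))" for i j
  proof
    assume "win ys n i = neg_mod q (rev (win ys n j))"
    then have "win (map f ys) n i = neg_mod q (rev (win (map f ys) n j))"
      by (simp only: win_f neg_f)
    then show False using SOS unfolding SOS_def by blast
  qed
  ultimately show ?thesis
    using range unfolding SOS_def OS_def by blast
qed

lemma good_if_zero_free:
  assumes "xs \<noteq> []" and "0 \<notin> set xs" and "1 < n"
  shows "good n xs"
  unfolding good_def
proof (intro allI notI)
  fix i assume "win xs (n - 1) i = replicate (n - 1) 0"
  then have "xs ! (i mod length xs) = 0"
    using win_nth[of 0 "n - 1" xs i] \<open>1 < n\<close> by simp
  then show False using assms(1,2) by (metis length_greater_0_conv mod_less_divisor nth_mem)
qed

definition restore_zeros :: "int \<Rightarrow> int \<Rightarrow> int \<Rightarrow> int" where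
  "restore_zeros q q' x = (if x = q + 1 \<or> x = q' - q - 1 then 0 else x)"

lemma restore_zeros_minus_mod:
  assumes "0 \<le> q" and "q + 1 < q'" and "0 \<le> x" and "x < q'"
  shows "restore_zeros q q' ((- x) mod q') = (- restore_zeros q q' x) mod q'"
proof (cases "x = 0")
  case False
  then have "(- x) mod q' = q' - x"
    using assms by (simp add: minus_mod_eq_diff)
  then show ?thesis
    using assms False by (auto simp: restore_zeros_def minus_mod_eq_diff)
qed (simp add: restore_zeros_def)

lemma half_zero_replacementE:
  assumes "half_zero_replacement q q' U U'"
  obtains Z where "Z \<subseteq> {k. k < length U \<and> U ! k = 0}"
    and "2 * card Z = card {k. k < length U \<and> U ! k = 0}"
    and "length U' = length U"
    and "\<And>k. k < length U \<Longrightarrow>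
           U' ! k = (if U ! k \<noteq> 0 then U ! k else if k \<in> Z then q + 1 else q' - q - 1)"
proof -
  obtain Z where "Z \<subseteq> {k. k < length U \<and> U ! k = 0}"
    and "2 * card Z = card {k. k < length U \<and> U ! k = 0}" and "length U' = length U"
    and "\<forall>k < length U. U ! k \<noteq> 0 \<longrightarrow> U' ! k = U ! k" and "\<forall>k \<in> Z. U' ! k = q + 1"
    and "\<forall>k < length U. U ! k = 0 \<and> k \<notin> Z \<longrightarrow> U' ! k = q' - q - 1"
    using assms unfolding half_zero_replacement_def by blast
  then show thesis
    by (intro that[of Z]) auto
qed

lemma weight_mod_half_zero_replacement:
  assumes "half_zero_replacement q q' U U'"
  shows "weight_mod q' U' = weight_mod q' U"
proof -
  obtain Z where Z: "Z \<subseteq> {k. k < length U \<and> U ! k = 0}"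
    and card_Z: "2 * card Z = card {k. k < length U \<and> U ! k = 0}"
    and len: "length U' = length U"
    and U': "\<And>k. k < length U \<Longrightarrow>
           U' ! k = (if U ! k \<noteq> 0 then U ! k else if k \<in> Z then q + 1 else q' - q - 1)"
    using half_zero_replacementE[OF assms] by blast
  define A where "A = {k. k < length U \<and> U ! k = 0}"
  have fin: "finite A" "finite Z"
    using Z by (auto simp: A_def intro: finite_subset)
  have card_A_Z: "card (A - Z) = card Z"
    using Z card_Z fin by (simp add: A_def card_Diff_subset)
  have "sum_list U' - sum_list U = (\<Sum>k<length U. U' ! k - U ! k)"
    using len by (simp add: sum_list_sum_nth atLeast0LessThan sum_subtractf)
  also have "\<dots> = (\<Sum>k\<in>A. U' ! k - U ! k)"
    by (rule sum.mono_neutral_right) (auto simp: A_def U')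
  also have "\<dots> = (\<Sum>k\<in>A - Z. U' ! k - U ! k) + (\<Sum>k\<in>Z. U' ! k - U ! k)"
    using Z fin by (intro sum.subset_diff) (auto simp: A_def)
  also have "\<dots> = (\<Sum>k\<in>A - Z. q' - q - 1) + (\<Sum>k\<in>Z. q + 1)"
    using Z by (intro arg_cong2[where f = "(+)"] sum.cong) (auto simp: A_def U')
  also have "\<dots> = int (card Z) * q'"
    using card_A_Z by (simp add: algebra_simps)
  finally have "sum_list U' = sum_list U + int (card Z) * q'"
    by (simp add: eq_diff_eq)
  then show ?thesis
    by (simp add: weight_mod_def weight_def)
qed

lemma half_zero_replacement_SOS_good:
  assumes rep: "half_zero_replacement q q' U U'" and SOS: "SOS q' n U" and "1 < n"
    and "0 \<le> q" and "q + 1 < q'" and "set U \<inter> {q + 1, q' - q - 1} = {}"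
  shows "SOS q' n U' \<and> good n U'"
proof -
  obtain Z where len: "length U' = length U"
    and U': "\<And>k. k < length U \<Longrightarrow>
           U' ! k = (if U ! k \<noteq> 0 then U ! k else if k \<in> Z then q + 1 else q' - q - 1)"
    using half_zero_replacementE[OF rep] by blast
  have U_range: "set U \<subseteq> {0..<q'}" and "U \<noteq> []"
    using SOS by (auto simp: SOS_def OS_def n_window_seq_def)
  have U'_range: "set U' \<subseteq> {0..<q'}" and zero_free: "0 \<notin> set U'"
    using U_range assms(4,5) nth_mem[of _ U]
    by (auto simp: in_set_conv_nth len U' subset_iff split: if_splits)
  have "U ! k \<noteq> q + 1 \<and> U ! k \<noteq> q' - q - 1" if "k < length U" for k
    using assms(6) nth_mem[OF that] by blast
  then have "map (restore_zeros q q') U' = U"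
    by (intro nth_equalityI) (auto simp: len U' restore_zeros_def)
  then have "SOS q' n (map (restore_zeros q q') U')"
    using SOS by simp
  moreover have "restore_zeros q q' ((- x) mod q') = (- restore_zeros q q' x) mod q'"
    if "x \<in> set U'" for x
    using restore_zeros_minus_mod[OF assms(4,5)] U'_range that by auto
  ultimately have "SOS q' n U'"
    using U'_range by (blast intro: SOS_reflect_map)
  moreover have "good n U'"
    using \<open>U \<noteq> []\<close> len zero_free \<open>1 < n\<close> by (intro good_if_zero_free) auto
  ultimately show ?thesis ..
qed

(* Entry r of block b of constrU for a = s_r, where e says that (-1)^(r+m-1) = 1. *)
definition block_entry :: "int \<Rightarrow> int \<Rightarrow> nat \<Rightarrow> bool \<Rightarrow> int \<Rightarrow> int" where
  "block_entry q q' b e a =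
     (if b = 0 then a
      else if b = 1 then (if a = 0 then 0 else q' - a)
      else if b = 2 then (if a = 0 then (if e then q else q' - q) else if e then a else q' - a)
      else (if a = 0 then (if e then q' - q else q) else if e then q' - a else a))"

(* Recovers s_r from every entry of U and of -U: the digit 0 of S appears there as 0, q or -q. *)
definition base_digit :: "int \<Rightarrow> int \<Rightarrow> int \<Rightarrow> int" where
  "base_digit q q' x = (if x < q then x else if x = q \<or> x = q' - q then 0 else q' - x)"

lemma less_4_cases: "b < 4 \<Longrightarrow> b = 0 \<or> b = 1 \<or> b = 2 \<or> b = (3::nat)"
  by auto

lemma block_entry_bounds:
  assumes "0 \<le> a" and "a < q" and "2 * q < q'" and "b < 4"
  shows "0 \<le> block_entry q q' b e a \<and> block_entry q q' b e a < q'
    \<and> (block_entry q q' b e a \<le> q \<or> q' - q \<le> block_entry q q' b e a)"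
  using less_4_cases[OF assms(4)] assms(1-3) by (auto simp: block_entry_def)

lemma base_digit_block_entry:
  assumes "0 \<le> a" and "a < q" and "2 * q < q'" and "b < 4"
  shows "base_digit q q' (block_entry q q' b e a) = a"
    and "base_digit q q' ((- block_entry q q' b e a) mod q') = a"
  using less_4_cases[OF assms(4)] assms(1-3)
  by (auto simp: block_entry_def base_digit_def minus_mod_eq_diff)

lemma minus_mod_block_entry:
  assumes "0 \<le> a" and "a < q" and "2 * q < q'"
  shows "(- block_entry q q' 0 e a) mod q' = block_entry q q' 1 e a"
    and "(- block_entry q q' 2 e a) mod q' = block_entry q q' 3 e a"
  using assms by (auto simp: block_entry_def minus_mod_eq_diff)

lemma block_entry_eq_cases:
  assumes "0 \<le> a" and "a < q" and "2 * q < q'" and "b < 4" and "b' < 4" and "b \<noteq> b'"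
    and "block_entry q q' b e a = block_entry q q' b' e a"
  shows "if a = 0 then b + b' = 1 else if e then even (b + b') else b + b' = 3"
  using less_4_cases[OF assms(4)] less_4_cases[OF assms(5)] assms
  by (auto simp: block_entry_def split: if_splits)

locale OS_lift =
  fixes q q' :: int and n :: nat and ss :: "int list"
  assumes q'_ge: "2 * q + 2 \<le> q'" and q_gt: "1 < q" and n_gt: "1 < n"
    and OS: "OS q n ss" and first_zero: "ss ! 0 = 0"
begin

abbreviation "m \<equiv> length ss"
abbreviation "U \<equiv> constrU q q' ss"
abbreviation "entry b r \<equiv> block_entry q q' b (even (r + m - 1)) (ss ! r)"

lemma m_pos: "0 < m"
  using OS by (auto simp: OS_def n_window_seq_def)

lemma digit_bounds:
  assumes "r < m" shows "0 \<le> ss ! r \<and> ss ! r < q"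
  using OS nth_mem[OF assms] by (auto simp: OS_def)

lemma lift_seq_ss: "lift_seq q' ss = ss"
proof -
  have "x mod q' = x" if "x \<in> set ss" for x
    using OS that q'_ge q_gt by (auto simp: OS_def subset_iff)
  then show ?thesis by (simp add: lift_seq_def map_idI)
qed

lemma length_U: "length U = 4 * m"
  by (simp add: constrU_def lift_seq_ss neg_mod_def t_seq_def)

lemma t_seq_nth: "r < m \<Longrightarrow> t_seq q q' ss ! r = entry 2 r"
  using digit_bounds[of r] q'_ge q_gt
  by (auto simp: t_seq_def block_entry_def minus_mod_eq_diff)

lemma U_nth_block:
  assumes "b < 4" and "r < m"
  shows "U ! (b * m + r) = entry b r"
proof -
  have bounds: "0 \<le> ss ! r" "ss ! r < q" "2 * q < q'"
    using digit_bounds[OF assms(2)] q'_ge by auto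
  have "length (t_seq q q' ss) = m"
    by (simp add: t_seq_def)
  then show ?thesis
    using less_4_cases[OF assms(1)] assms(2) t_seq_nth[OF assms(2)]
      minus_mod_block_entry[OF bounds, of "even (r + m - 1)"]
    by (auto simp: constrU_def lift_seq_ss neg_mod_def nth_append block_entry_def)
qed

lemma U_nth_mod:
  assumes "r < m"
  shows "U ! ((b * m + r) mod (4 * m)) = entry (b mod 4) r"
proof -
  have "(b * m + r) div m = b"
    using assms by (metis add.commute div_less div_mult_self1 not_less0 add_0)
  then have "(b * m + r) mod (m * 4) = m * (b mod 4) + r"
    using assms by (simp add: mod_mult2_eq)
  then show ?thesis
    using U_nth_block[of "b mod 4" r] assms by (simp add: mult.commute)
qed

lemma U_nth:
  assumes "k < length U"
  shows "U ! k = entry (k div m mod 4) (k mod m)"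
  using U_nth_mod[of "k mod m" "k div m"] assms m_pos by (simp add: length_U)

lemma U_entry_bounds:
  assumes "x \<in> set U"
  shows "0 \<le> x \<and> x < q' \<and> (x \<le> q \<or> q' - q \<le> x)"
proof -
  obtain k where "k < length U" and "x = U ! k"
    using assms by (auto simp: in_set_conv_nth)
  then show ?thesis
    using U_nth block_entry_bounds digit_bounds m_pos q'_ge by simp
qed

lemma base_digit_U:
  assumes "k < length U"
  shows "base_digit q q' (U ! k) = ss ! (k mod m)"
    and "base_digit q q' ((- (U ! k)) mod q') = ss ! (k mod m)"
  using U_nth[OF assms] base_digit_block_entry digit_bounds m_pos q'_ge by simp_all

lemma base_digit_win_U: "map (base_digit q q') (win U n i) = win ss n i"
  using m_pos base_digit_U(1) by (intro win_cover[where c = 4]) (auto simp: length_U)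

lemma U_win_not_rev: "win U n i \<noteq> rev (win U n j)"
proof
  assume "win U n i = rev (win U n j)"
  then have "win ss n i = rev (win ss n j)"
    by (metis base_digit_win_U rev_map)
  then show False
    using OS by (simp add: OS_def)
qed

lemma U_win_not_neg_rev: "win U n i \<noteq> neg_mod q' (rev (win U n j))"
proof
  assume eq: "win U n i = neg_mod q' (rev (win U n j))"
  have "U \<noteq> []"
    using length_U m_pos by auto
  then have "base_digit q q' ((- x) mod q') = base_digit q q' x" if "x \<in> set (win U n j)" for x
    using that set_win_subset base_digit_U by (fastforce simp: in_set_conv_nth)
  then have "map (base_digit q q') (neg_mod q' (rev (win U n j))) = rev (win ss n j)"
    by (simp add: neg_mod_def rev_map flip: base_digit_win_U)
  then have "win ss n i = rev (win ss n j)"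
    using eq base_digit_win_U by metis
  then show False
    using OS by (simp add: OS_def)
qed

lemma entry_eq_cases:
  assumes "r < m" and "b < 4" and "b' < 4" and "b \<noteq> b'" and "entry b r = entry b' r"
  shows "if ss ! r = 0 then b + b' = 1 else if even (r + m - 1) then even (b + b') else b + b' = 3"
  using digit_bounds[OF assms(1)] q'_ge assms(2-) by (intro block_entry_eq_cases) auto

lemma win_U_agree:
  assumes "win U n i = win U n i'" and "j < n"
  shows "U ! ((i + j) mod (4 * m)) = U ! ((i' + j) mod (4 * m))"
  using arg_cong[OF assms(1), of "\<lambda>w. w ! j"] assms(2) by (simp add: length_U)

lemma win_U_blocks_0_1:
  assumes "r < m"
  shows "win U n r \<noteq> win U n (m + r)"
proof
  assume eq: "win U n r = win U n (m + r)"
  show False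
  proof (cases "r + n \<le> m")
    case True
    have "ss ! ((r + j) mod m) = 0" if "j < n" for j
    proof -
      have "r + j < m"
        using True that by simp
      moreover have "entry 0 (r + j) = entry 1 (r + j)"
        using win_U_agree[OF eq that] U_nth_mod[of "r + j" 0] U_nth_mod[of "r + j" 1] \<open>r + j < m\<close>
        by (simp add: add.assoc)
      ultimately show ?thesis
        using entry_eq_cases[of "r + j" 0 1] by (auto split: if_splits)
    qed
    then have "win ss n r = replicate n 0"
      by (intro nth_equalityI) auto
    then have "win ss n r = rev (win ss n r)"
      by simp
    then show False
      using OS by (simp add: OS_def)
  next
    case False
    then have "m - r < n" and "r + (m - r) = 1 * m + 0" and "m + r + (m - r) = 2 * m + 0"
      using assms by auto
    then have "U ! ((1 * m + 0) mod (4 * m)) = U ! ((2 * m + 0) mod (4 * m))"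
      using win_U_agree[OF eq] by metis
    then have "entry 1 0 = entry 2 0"
      using U_nth_mod[of 0 1] U_nth_mod[of 0 2] m_pos by (simp add: mult.commute)
    then show False
      using entry_eq_cases[of 0 1 2] m_pos first_zero by simp
  qed
qed

(* The sign of t_r alternates with r, so only the blocks S and -S can agree at two
  consecutive offsets. *)
lemma entry_agree_consecutive:
  assumes "r + 1 < m" and "b < 4" and "b' < 4" and "b \<noteq> b'"
    and "entry b r = entry b' r" and "entry b (r + 1) = entry b' (r + 1)"
  shows "b + b' = 1"
proof -
  have "r < m"
    using assms(1) by simp
  note at_r = entry_eq_cases[OF this assms(2-5)]
  note at_r1 = entry_eq_cases[OF assms(1-4,6)]
  have parity: "even (r + 1 + m - 1) \<longleftrightarrow> \<not> even (r + m - 1)"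
    using m_pos by simp
  have parity_flip: "s = 1"
    if "if z0 then s = 1 else if P then even s else s = (3::nat)"
      and "if z1 then s = 1 else if \<not> P then even s else s = 3" for z0 z1 P s
    using that by (cases z0; cases z1; cases P) auto
  show ?thesis
    using parity_flip[OF at_r at_r1[unfolded parity]] .
qed

lemma entry_agree_wraparound:
  assumes "b < 4" and "b' < 4" and "b \<noteq> b'" and "entry b (m - 1) = entry b' (m - 1)"
    and "entry (Suc b mod 4) 0 = entry (Suc b' mod 4) 0"
  shows False
proof -
  have "m - 1 < m" and "m - 1 + m - 1 = 2 * (m - 1)"
    using m_pos by simp_all
  then have "even (m - 1 + m - 1)"
    by simp
  then have "if ss ! (m - 1) = 0 then b + b' = 1 else even (b + b')"
    using entry_eq_cases[OF \<open>m - 1 < m\<close> assms(1-4)] by (simp only: if_True)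
  moreover have "Suc b mod 4 < 4" and "Suc b' mod 4 < 4" and "Suc b mod 4 \<noteq> Suc b' mod 4"
    using assms(1-3) by (auto simp: mod_Suc)
  then have "Suc b mod 4 + Suc b' mod 4 = 1"
    using entry_eq_cases[of 0 "Suc b mod 4" "Suc b' mod 4"] assms(5) first_zero m_pos by simp
  then have "b + b' = 3"
    using less_4_cases[OF assms(1)] less_4_cases[OF assms(2)] by auto
  ultimately show False
    by (simp split: if_splits)
qed

lemma win_U_blocks:
  assumes "r < m" and "b < 4" and "b' < 4" and "b \<noteq> b'"
  shows "win U n (b * m + r) \<noteq> win U n (b' * m + r)"
proof
  assume eq: "win U n (b * m + r) = win U n (b' * m + r)"
  note agree = win_U_agree[OF eq]
  have at_r: "entry b r = entry b' r"
    using agree[of 0] n_gt U_nth_mod[OF assms(1), of b] U_nth_mod[OF assms(1), of b'] assms(2,3)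
    by simp
  show False
  proof (cases "r + 1 < m")
    case True
    have "entry b (r + 1) = entry b' (r + 1)"
      using agree[of 1] n_gt U_nth_mod[OF True, of b] U_nth_mod[OF True, of b'] assms(2,3)
      by (simp add: add.assoc)
    then have "b = 0 \<and> b' = 1 \<or> b = 1 \<and> b' = 0"
      using entry_agree_consecutive[OF True assms(2-4) at_r] by auto
    then show False
      using eq win_U_blocks_0_1[OF assms(1)] by auto
  next
    case False
    then have r: "r = m - 1"
      using assms(1) by simp
    have next_block: "c * m + r + 1 = Suc c * m + 0" for c
      using r m_pos by simp
    have "U ! ((Suc b * m + 0) mod (4 * m)) = U ! ((Suc b' * m + 0) mod (4 * m))"
      using agree[of 1, unfolded next_block] n_gt by simp
    then have "entry (Suc b mod 4) 0 = entry (Suc b' mod 4) 0"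
      using U_nth_mod[of 0 "Suc b"] U_nth_mod[of 0 "Suc b'"] m_pos by simp
    then show False
      using entry_agree_wraparound[OF assms(2-4) at_r[unfolded r]] by blast
  qed
qed

lemma U_n_window: "n_window_seq n U"
  unfolding n_window_seq_def
proof (intro conjI allI impI)
  show "U \<noteq> []"
    using length_U m_pos by auto
next
  fix i j assume eq: "win U n i = win U n j"
  then have "win ss n i = win ss n j"
    by (metis base_digit_win_U)
  then have r: "i mod m = j mod m"
    using OS unfolding OS_def n_window_seq_def by blast
  define b b' where "b = i div m mod 4" and "b' = j div m mod 4"
  have i: "i mod length U = b * m + i mod m"
    using mod_mult2_eq[of i m 4] by (simp add: length_U b_def mult.commute)
  have j: "j mod length U = b' * m + i mod m"
    using mod_mult2_eq[of j m 4] r by (simp add: length_U b'_def mult.commute)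
  have "win U n (b * m + i mod m) = win U n (b' * m + i mod m)"
    using eq win_mod[of U n i] win_mod[of U n j] unfolding i j by simp
  moreover have "i mod m < m" and "b < 4" and "b' < 4"
    using m_pos by (simp_all add: b_def b'_def)
  ultimately have "b = b'"
    using win_U_blocks by blast
  then show "i mod length U = j mod length U"
    using i j by simp
qed

lemma SOS_U: "SOS q' n U"
proof -
  have "set U \<subseteq> {0..<q'}"
    using U_entry_bounds by auto
  then show ?thesis
    using U_n_window U_win_not_rev U_win_not_neg_rev unfolding SOS_def OS_def by blast
qed

lemma U_avoids_replacements: "set U \<inter> {q + 1, q' - q - 1} = {}"
proof -
  have "x \<noteq> q + 1 \<and> x \<noteq> q' - q - 1" if "x \<in> set U" for x
    using U_entry_bounds[OF that] q'_ge by linarith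
  then show ?thesis
    by blast
qed

lemma weight_mod_U: "weight_mod q' U = 0"
proof -
  have "sum_list U = (sum_list ss + sum_list (neg_mod q' ss))
      + (sum_list (t_seq q q' ss) + sum_list (neg_mod q' (t_seq q q' ss)))"
    by (simp add: constrU_def lift_seq_ss)
  then have "q' dvd sum_list U"
    by (simp add: dvd_sum_list_plus_neg_mod)
  then show ?thesis
    by (simp add: weight_mod_def weight_def)
qed

end

theorem theorem4p4:
  fixes q q' :: int and n :: nat and ss U' :: "int list"
  assumes "q' \<ge> 2 * q + 2" and "q > 1" and "n > 1"
    and "OS q n ss" and "ss ! 0 = 0"
    and "half_zero_replacement q q' (constrU q q' ss) U'"
  shows "SOS q' n U' \<and> good n U' \<and> length U' = length (constrU q q' ss)
         \<and> weight_mod q' U' = 0"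
proof -
  interpret OS_lift q q' n ss
    using assms(1-5) by unfold_locales
  have "SOS q' n U' \<and> good n U'"
    using half_zero_replacement_SOS_good[OF assms(6) SOS_U assms(3) _ _ U_avoids_replacements]
      assms(1,2) by simp
  moreover have "length U' = length U"
    using assms(6) by (simp add: half_zero_replacement_def)
  moreover have "weight_mod q' U' = 0"
    using weight_mod_half_zero_replacement[OF assms(6)] weight_mod_U by simp
  ultimately show ?thesis
    by blast
qed

end
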